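(* Let $\Gamma$ be a non-amenable group. If $\Gamma$ has property RD$_p$ for some $p\in[1,2]$, then $r(\Gamma)\ge 1-1/p$. In particular, if $\Gamma$ has property RD (i.e. RD$_2$), then $r(\Gamma)=1/2$.
   Context: For $1\le p<\infty$, $\Gamma$ has property RD$_p$ if there exist a length function $L$ on $\Gamma$ (i.e. $L\colon\Gamma\to[0,\infty)$ with $L(e)=0$, $L(g^{-1})=L(g)$, $L(gh)\le L(g)+L(h)$) and a polynomial $P$ such that $\|a\|_{p\to p}\le P(d)\|a\|_p$ for every $a\in\mathbf{C}[\Gamma]$ and $d\ge0$ such that $a$ is supported in the $L$-ball of radius $d$; here $\|a\|_{p\to p}$ is the operator norm of left convolution by $a$ on $\ell^p(\Gamma)$. For finite symmetric $S$, $\rho(\Gamma,S)=\|\frac1{|S|}\mathbf{1}_S\|_{2\to2}$, and $r(\Gamma)=-\liminf_S\frac{\ln\rho(\Gamma,S)}{\ln|S|}$, the liminf over the directed set of finite symmetric subsets ordered by inclusion ($\liminf_Sf(S)=\sup_S\inf_{S'\supseteq S}f(S')$). *)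

theory Defs
  imports "HOL-Analysis.Analysis" "HOL-Computational_Algebra.Polynomial"
begin

text \<open>The discrete group Gamma is the type 'a of class group_add; the group
operation is written additively (+, 0, unary minus), no commutativity assumed.
Elements of the group ring C[Gamma] are finitely supported functions 'a => complex.\<close>

definition supp :: "('a \<Rightarrow> complex) \<Rightarrow> 'a set" where
  "supp a = {g. a g \<noteq> 0}"

definition conv :: "('a::group_add \<Rightarrow> complex) \<Rightarrow> ('a \<Rightarrow> complex) \<Rightarrow> 'a \<Rightarrow> complex" where
  "conv a f x = (\<Sum>g\<in>supp a. a g * f (- g + x))"

definition in_lp :: "real \<Rightarrow> ('a \<Rightarrow> complex) \<Rightarrow> bool" where
  "in_lp p f \<longleftrightarrow> (\<lambda>x. norm (f x) powr p) summable_on UNIV"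

definition lp_norm :: "real \<Rightarrow> ('a \<Rightarrow> complex) \<Rightarrow> real" where
  "lp_norm p f = (\<Sum>\<^sub>\<infinity>x. norm (f x) powr p) powr (1 / p)"

definition op_norm :: "real \<Rightarrow> ('a::group_add \<Rightarrow> complex) \<Rightarrow> real" where
  "op_norm p a = Sup {lp_norm p (conv a f) | f. in_lp p f \<and> lp_norm p f \<le> 1}"

definition length_function :: "('a::group_add \<Rightarrow> real) \<Rightarrow> bool" where
  "length_function L \<longleftrightarrow> (\<forall>g. L g \<ge> 0) \<and> L 0 = 0 \<and> (\<forall>g. L (- g) = L g) \<and>
     (\<forall>g h. L (g + h) \<le> L g + L h)"

definition has_RD :: "real \<Rightarrow> 'a::group_add itself \<Rightarrow> bool" where
  "has_RD p _ \<longleftrightarrow> (\<exists>(L::'a \<Rightarrow> real) (P::real poly). length_function L \<and>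
     (\<forall>(a::'a \<Rightarrow> complex) d. finite (supp a) \<and> d \<ge> 0 \<and> supp a \<subseteq> {g. L g \<le> d} \<longrightarrow>
        op_norm p a \<le> poly P d * lp_norm p a))"

definition finite_symmetric :: "'a::group_add set \<Rightarrow> bool" where
  "finite_symmetric S \<longleftrightarrow> finite S \<and> (\<forall>g\<in>S. - g \<in> S)"

definition rho :: "'a::group_add set \<Rightarrow> real" where
  "rho S = op_norm 2 (\<lambda>g. if g \<in> S then complex_of_real (1 / real (card S)) else 0)"

text \<open>r(Gamma) = - liminf_S ln rho(S) / ln |S| over the directed set of finite
symmetric subsets ordered by inclusion; liminf_S f = sup_S inf_{S' \<supseteq> S} f(S').\<close>
definition r_exponent :: "'a::group_add itself \<Rightarrow> ereal" where
  "r_exponent _ = - (SUP S\<in>{S::'a set. finite_symmetric S}.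
        INF S'\<in>{S'. finite_symmetric S' \<and> S \<subseteq> S'}.
          ereal (ln (rho S') / ln (real (card S'))))"

definition amenable :: "'a::group_add itself \<Rightarrow> bool" where
  "amenable _ \<longleftrightarrow> (\<exists>m :: ('a \<Rightarrow> real) \<Rightarrow> real.
     (\<forall>f g. bounded (range f) \<and> bounded (range g) \<longrightarrow> m (\<lambda>x. f x + g x) = m f + m g) \<and>
     (\<forall>f c. bounded (range f) \<longrightarrow> m (\<lambda>x. c * f x) = c * m f) \<and>
     (\<forall>f. bounded (range f) \<and> (\<forall>x. f x \<ge> 0) \<longrightarrow> m f \<ge> 0) \<and>
     m (\<lambda>_. 1) = 1 \<and>
     (\<forall>f h. bounded (range f) \<longrightarrow> m (\<lambda>x. f (h + x)) = m f))"

end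

theory Submission
  imports Defs
begin

text \<open>For a finite symmetric \<open>S\<close>, \<open>\<rho>(S)\<close> is the spectral radius of the random walk driven by
  \<open>\<mu> = 1\<^sub>S/|S|\<close>, so it is controlled by the decay of the return probabilities \<open>\<mu>\<^sup>*\<^sup>n(0)\<close>,
  which in turn are at most \<open>\<parallel>\<lambda>(\<mu>)\<parallel>\<^sub>p\<^sub>\<rightarrow>\<^sub>p\<^sup>n\<close>. Property RD\<open>\<^sub>p\<close> bounds the latter norm by \<open>P(d) |S|\<^bsup>1/p - 1\<^esup>\<close>
  when \<open>S\<close> lies in the ball of radius \<open>d\<close>. If \<open>r(\<Gamma>) < 1 - 1/p\<close>, then \<open>\<rho>(S) \<ge> |S|\<^bsup>1/p - 1 + \<eta>\<^esup>\<close> for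
  all large \<open>S\<close>, and taking \<open>S\<close> a ball shows that balls grow polynomially; suitable balls then form
  a Folner sequence, contradicting non-amenability. The upper bound \<open>r(\<Gamma>) \<le> 1/2\<close> follows from
  \<open>\<rho>(S) \<ge> \<parallel>\<mu>\<parallel>\<^sub>2 = |S|\<^bsup>-1/2\<^esup>\<close>.\<close>

section \<open>Ultrafilters\<close>

definition ultrafilter :: "'a filter \<Rightarrow> bool" where
  "ultrafilter U \<longleftrightarrow> U \<noteq> bot \<and> (\<forall>P. eventually P U \<or> eventually (\<lambda>x. \<not> P x) U)"

lemma ultrafilter_if_maximal:
  assumes U: "U \<noteq> bot" and max: "\<And>G. G \<noteq> bot \<Longrightarrow> G \<le> U \<Longrightarrow> G = U"
  shows "ultrafilter U"
  unfolding ultrafilter_def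
proof (intro conjI allI U disjCI)
  fix P
  assume "\<not> eventually (\<lambda>x. \<not> P x) U"
  then have "inf U (principal {x. P x}) \<noteq> bot"
    by (simp add: trivial_limit_def eventually_inf_principal)
  then have "inf U (principal {x. P x}) = U"
    by (rule max) simp
  moreover have "eventually P (inf U (principal {x. P x}))"
    by (simp add: eventually_inf_principal)
  ultimately show "eventually P U" by simp
qed

lemma ultrafilter_le_exists:
  fixes F :: "'a filter"
  assumes F: "F \<noteq> bot"
  obtains U where "U \<le> F" "ultrafilter U"
proof -
  define R where "R = {(b, a). a \<noteq> (bot::'a filter) \<and> a \<le> b \<and> b \<le> F}"
  have field_R: "Field R = {G. G \<noteq> bot \<and> G \<le> F}"
    unfolding R_def by (auto simp: Field_def bot_unique)
  have "Partial_order R"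
    unfolding R_def by (auto simp: partial_order_on_def preorder_on_def
          antisym_def refl_on_def trans_def Field_def bot_unique)
  then have "\<exists>m\<in>Field R. \<forall>a\<in>Field R. (m, a) \<in> R \<longrightarrow> a = m"
  proof (rule Zorns_po_lemma)
    fix C assume C: "C \<in> Chains R"
    have chain: "\<And>x y. x \<in> C \<Longrightarrow> y \<in> C \<Longrightarrow> x \<le> y \<or> y \<le> x"
      and proper: "\<And>x. x \<in> C \<Longrightarrow> x \<noteq> bot \<and> x \<le> F"
      using C unfolding Chains_def R_def by auto
    show "\<exists>u\<in>Field R. \<forall>a\<in>C. (a, u) \<in> R"
    proof (cases "C = {}")
      case True
      then show ?thesis using F unfolding field_R by auto
    next
      case False
      have "Inf C \<noteq> bot"
      proof
        assume "Inf C = bot"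
        then have "eventually (\<lambda>_. False) (Inf C)" by simp
        then have "\<exists>b\<in>C. eventually (\<lambda>_. False) b"
          by (subst (asm) eventually_Inf_base) (use False chain in auto)
        then show False using proper by (auto simp: trivial_limit_def)
      qed
      moreover have "Inf C \<le> F"
        using False proper by (meson Inf_lower order_trans ex_in_conv)
      ultimately show ?thesis unfolding field_R
        by (intro bexI[of _ "Inf C"]) (auto simp: R_def proper Inf_lower)
    qed
  qed
  then obtain U where "U \<noteq> bot" "U \<le> F" and max: "\<forall>a\<in>Field R. (U, a) \<in> R \<longrightarrow> a = U"
    unfolding field_R by blast
  moreover have "ultrafilter U"
  proof (rule ultrafilter_if_maximal)
    fix G assume "G \<noteq> bot" "G \<le> U"
    then show "G = U"
      using \<open>U \<le> F\<close> max unfolding field_R by (auto simp: R_def intro: order_trans)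
  qed fact
  ultimately show ?thesis using that by blast
qed

lemma ultrafilter_bounded_convergent:
  fixes x :: "'b \<Rightarrow> real"
  assumes U: "ultrafilter U" and bound: "\<And>n. \<bar>x n\<bar> \<le> M"
  obtains l where "(x \<longlongrightarrow> l) U"
proof -
  have "eventually (\<lambda>y. y \<in> {-M..M}) (filtermap x U)"
    using bound by (auto simp: eventually_filtermap abs_le_iff intro!: always_eventually)
      (metis minus_le_iff)
  moreover have "filtermap x U \<noteq> bot"
    using U by (simp add: ultrafilter_def filtermap_bot_iff)
  ultimately obtain l where l: "inf (nhds l) (filtermap x U) \<noteq> bot"
    using compact_Icc[of "-M" M, unfolded compact_filter] by blast
  have "(x \<longlongrightarrow> l) U"
    unfolding tendsto_def
  proof (intro allI impI)
    fix S :: "real set" assume S: "open S" "l \<in> S"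
    show "eventually (\<lambda>n. x n \<in> S) U"
    proof (rule ccontr)
      assume "\<not> eventually (\<lambda>n. x n \<in> S) U"
      then have "eventually (\<lambda>y. y \<notin> S) (filtermap x U)"
        using U by (auto simp: ultrafilter_def eventually_filtermap)
      moreover have "eventually (\<lambda>y. y \<in> S) (nhds l)"
        using S by (rule eventually_nhds_in_open)
      ultimately have "eventually (\<lambda>_. False) (inf (nhds l) (filtermap x U))"
        unfolding eventually_inf by blast
      then show False using l by (simp add: trivial_limit_def)
    qed
  qed
  then show ?thesis using that by blast
qed

section \<open>Amenability from Folner sequences and polynomial growth\<close>

definition set_average :: "'a set \<Rightarrow> ('a \<Rightarrow> real) \<Rightarrow> real" where
  "set_average F f = (\<Sum>x\<in>F. f x) / real (card F)"

lemma abs_set_average_le: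
  assumes "finite F" "F \<noteq> {}" and "\<And>x. \<bar>f x\<bar> \<le> M"
  shows "\<bar>set_average F f\<bar> \<le> M"
proof -
  have "\<bar>\<Sum>x\<in>F. f x\<bar> \<le> M * card F"
    using order_trans[OF sum_abs sum_bounded_above[of F "\<lambda>y. \<bar>f y\<bar>" M]] assms(3)
    by (simp add: mult.commute)
  then show ?thesis
    using assms(1,2) by (simp add: set_average_def abs_div pos_divide_le_eq card_gt_0_iff)
qed

lemma set_average_translate_diff:
  fixes F :: "'a::group_add set"
  assumes F: "finite F" and bound: "\<And>x. \<bar>f x\<bar> \<le> M"
  shows "\<bar>set_average F (\<lambda>x. f (h + x)) - set_average F f\<bar>
           \<le> 2 * M * (real (card ((+) h ` F - F)) / real (card F))"
proof -
  define G where "G = (+) h ` F"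
  have inj: "inj_on ((+) h) F" by (auto simp: inj_on_def)
  have finite_G: "finite G" and card_G: "card G = card F"
    using F card_image[OF inj] by (simp_all add: G_def)
  have "(\<Sum>x\<in>F. f (h + x)) = (\<Sum>y\<in>G. f y)"
    unfolding G_def by (simp add: sum.reindex[OF inj])
  also have "\<dots> = (\<Sum>y\<in>G \<inter> F. f y) + (\<Sum>y\<in>G - F. f y)"
    using finite_G by (metis sum.Int_Diff)
  finally have sum_G: "(\<Sum>x\<in>F. f (h + x)) = (\<Sum>y\<in>G \<inter> F. f y) + (\<Sum>y\<in>G - F. f y)" .
  have sum_F: "(\<Sum>y\<in>F. f y) = (\<Sum>y\<in>G \<inter> F. f y) + (\<Sum>y\<in>F - G. f y)"
    using F by (metis sum.Int_Diff inf_commute)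
  have "card (F - G) = card (G - F)"
    using F finite_G card_G by (simp add: card_Diff_subset_Int inf_commute)
  then have "\<bar>\<Sum>y\<in>G - F. f y\<bar> \<le> M * card (G - F)" "\<bar>\<Sum>y\<in>F - G. f y\<bar> \<le> M * card (G - F)"
    using order_trans[OF sum_abs sum_bounded_above[of _ "\<lambda>y. \<bar>f y\<bar>" M]] bound
    by (metis mult.commute)+
  then have "\<bar>(\<Sum>x\<in>F. f (h + x)) - (\<Sum>x\<in>F. f x)\<bar> \<le> 2 * M * card (G - F)"
    unfolding sum_G sum_F by linarith
  then show ?thesis
    by (simp add: set_average_def G_def diff_divide_distrib[symmetric] abs_div divide_right_mono)
qed

lemma bounded_range_imp_abs_le:
  fixes f :: "'a \<Rightarrow> real"
  assumes "bounded (range f)"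
  obtains M where "\<And>x. \<bar>f x\<bar> \<le> M"
  using assms by (auto simp: bounded_iff)

lemma set_average_translate_tendsto:
  fixes F :: "nat \<Rightarrow> 'a::group_add set"
  assumes fin: "\<And>n. finite (F n)" and bound: "\<And>x. \<bar>f x\<bar> \<le> M"
    and Folner: "((\<lambda>n. real (card ((+) h ` F n - F n)) / real (card (F n))) \<longlongrightarrow> 0) sequentially"
  shows "((\<lambda>n. set_average (F n) (\<lambda>x. f (h + x)) - set_average (F n) f) \<longlongrightarrow> 0) sequentially"
proof (rule Lim_null_comparison)
  show "eventually (\<lambda>n. norm (set_average (F n) (\<lambda>x. f (h + x)) - set_average (F n) f)
          \<le> 2 * M * (real (card ((+) h ` F n - F n)) / real (card (F n)))) sequentially"
    using set_average_translate_diff[of "F _" f M h] fin bound by (auto intro: always_eventually)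
  show "((\<lambda>n. 2 * M * (real (card ((+) h ` F n - F n)) / real (card (F n)))) \<longlongrightarrow> 0) sequentially"
    using tendsto_mult_right_zero[OF Folner] .
qed

text \<open>The invariant mean is the limit of the Folner averages along an ultrafilter.\<close>
lemma amenable_if_Folner_sequence:
  fixes F :: "nat \<Rightarrow> 'a::group_add set"
  assumes fin: "\<And>n. finite (F n)" and ne: "\<And>n. F n \<noteq> {}"
    and Folner: "\<And>h. ((\<lambda>n. real (card ((+) h ` F n - F n)) / real (card (F n))) \<longlongrightarrow> 0) sequentially"
  shows "amenable TYPE('a)"
proof -
  obtain U :: "nat filter" where U: "U \<le> sequentially" "ultrafilter U"
    using ultrafilter_le_exists[of sequentially] by auto
  have U_proper: "U \<noteq> bot" using U(2) by (simp add: ultrafilter_def)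
  define A where "A f n = set_average (F n) f" for f :: "'a \<Rightarrow> real" and n
  define m where "m f = Lim U (A f)" for f
  have m_unique: "m f = l" if "(A f \<longlongrightarrow> l) U" for f l
    unfolding m_def using tendsto_Lim[OF U_proper that] .
  have lim: "(A f \<longlongrightarrow> m f) U" if f: "bounded (range f)" for f
  proof -
    obtain M where "\<And>x. \<bar>f x\<bar> \<le> M" using bounded_range_imp_abs_le[OF f] by blast
    then obtain l where "(A f \<longlongrightarrow> l) U"
      using ultrafilter_bounded_convergent[OF U(2)] abs_set_average_le[OF fin ne] unfolding A_def by metis
    then show ?thesis using m_unique by simp
  qed
  have "m (\<lambda>x. f x + g x) = m f + m g" if "bounded (range f)" "bounded (range g)" for f g
  proof (rule m_unique)
    have "A (\<lambda>x. f x + g x) = (\<lambda>n. A f n + A g n)"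
      by (simp add: A_def set_average_def fun_eq_iff sum.distrib add_divide_distrib)
    then show "(A (\<lambda>x. f x + g x) \<longlongrightarrow> m f + m g) U"
      using tendsto_add[OF lim lim] that by simp
  qed
  moreover have "m (\<lambda>x. c * f x) = c * m f" if "bounded (range f)" for f c
  proof (rule m_unique)
    have "A (\<lambda>x. c * f x) = (\<lambda>n. c * A f n)"
      by (simp add: A_def set_average_def fun_eq_iff sum_distrib_left)
    then show "(A (\<lambda>x. c * f x) \<longlongrightarrow> c * m f) U"
      using tendsto_mult_left[OF lim[OF that]] by simp
  qed
  moreover have "m f \<ge> 0" if "bounded (range f)" "\<forall>x. f x \<ge> 0" for f
  proof (rule tendsto_lowerbound[OF lim[OF that(1)] _ U_proper])
    show "eventually (\<lambda>n. A f n \<ge> 0) U"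
      using that by (auto simp: A_def set_average_def intro!: always_eventually sum_nonneg divide_nonneg_nonneg)
  qed
  moreover have "m (\<lambda>_. 1) = 1"
  proof (rule m_unique)
    have "A (\<lambda>_. 1) = (\<lambda>_. 1)"
      using fin ne by (simp add: A_def set_average_def fun_eq_iff card_gt_0_iff)
    then show "(A (\<lambda>_. 1) \<longlongrightarrow> 1) U" by simp
  qed
  moreover have "m (\<lambda>x. f (h + x)) = m f" if f: "bounded (range f)" for f h
  proof (rule m_unique)
    obtain M where M: "\<And>x. \<bar>f x\<bar> \<le> M" using bounded_range_imp_abs_le[OF f] by blast
    have "((\<lambda>n. A (\<lambda>x. f (h + x)) n - A f n) \<longlongrightarrow> 0) U"
      using tendsto_mono[OF U(1) set_average_translate_tendsto[OF fin M Folner]]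
      unfolding A_def .
    then show "(A (\<lambda>x. f (h + x)) \<longlongrightarrow> m f) U"
      using tendsto_add[OF _ lim[OF f]] by fastforce
  qed
  ultimately show ?thesis
    unfolding amenable_def by (intro exI[of _ m]) blast
qed

lemma exists_power_gt_polynomial:
  fixes q n A C k :: real
  assumes q: "q > 1" and n: "n > 0" and A: "A \<ge> 1" and C: "C > 0" and k: "k \<ge> 0"
  obtains j :: nat where "C * (A + real j * n) powr k < q ^ j"
proof -
  define e where "e = ln q / (2 * (k + 1) * n)"
  have lq: "ln q > 0" using q by simp
  have "e > 0" unfolding e_def using lq n k by simp
  then have "eventually (\<lambda>x. \<bar>ln x / x - 0\<bar> < e) at_top"
    using ln_x_over_x_tendsto_0 by (simp add: tendsto_iff dist_real_def)
  then obtain X where X: "\<And>x. x \<ge> X \<Longrightarrow> \<bar>ln x / x\<bar> < e"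
    by (auto simp: eventually_at_top_linorder)
  obtain j :: nat where j: "real j > max (X / n) (2 * \<bar>ln C\<bar> / ln q + A / n + 1)"
    using reals_Archimedean2 by blast
  define x where "x = A + real j * n"
  have x1: "x \<ge> 1" unfolding x_def using A n by (simp add: add_increasing2)
  have "real j * n > X" using j n by (simp add: pos_divide_less_eq)
  then have "x \<ge> X" unfolding x_def using A by linarith
  then have "ln x / x < e" using X by (meson abs_ge_self le_less_trans)
  then have "ln x \<le> e * x" using x1 by (simp add: divide_less_eq)
  then have "k * ln x \<le> k * (e * x)" using k by (rule mult_left_mono)
  also have "\<dots> = (k / (k + 1)) * (ln q / 2) * (A / n + real j)"
    unfolding e_def x_def using n k by (simp add: field_simps)
  also have "\<dots> \<le> (ln q / 2) * (A / n + real j)"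
  proof -
    have "k / (k + 1) \<le> 1" and "(ln q / 2) * (A / n + real j) \<ge> 0"
      using lq A n k by auto
    then show ?thesis by (metis mult.assoc mult_left_le_one_le k divide_nonneg_nonneg
          add_nonneg_nonneg zero_le_one)
  qed
  finally have "k * ln x \<le> (ln q / 2) * (A / n + real j)" .
  moreover have "ln C < (ln q / 2) * (real j - A / n)"
  proof -
    have "(ln q / 2) * (real j - A / n) > (ln q / 2) * (2 * \<bar>ln C\<bar> / ln q)"
      using j lq by (intro mult_strict_left_mono) auto
    then show ?thesis using lq by simp
  qed
  ultimately have "ln (C * x powr k) < ln (q ^ j)"
    using C x1 q by (simp add: ln_mult ln_powr ln_realpow algebra_simps)
  then have "C * x powr k < q ^ j"
    using C x1 q by (subst (asm) ln_less_cancel_iff) auto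
  then show ?thesis using that unfolding x_def by blast
qed

text \<open>Otherwise \<open>b\<close> would grow exponentially along \<open>d0 + j n\<close>.\<close>
lemma exists_radius_slow_growth:
  fixes b :: "real \<Rightarrow> real"
  assumes b0: "b d0 \<ge> 1" and poly: "\<And>d. d \<ge> d0 \<Longrightarrow> b d \<le> C * (1 + d) powr k"
    and d0: "d0 \<ge> 0" and C: "C > 0" and k: "k \<ge> 0" and q: "q > 1" and n: "n > 0"
  obtains d where "d \<ge> d0" "b (d + n) \<le> q * b d"
proof (rule ccontr)
  note slow = that
  assume "\<not> thesis"
  then have fast: "b (d + n) > q * b d" if "d \<ge> d0" for d
    using slow[OF that] by (meson not_le)
  have grow: "b (d0 + real j * n) \<ge> q ^ j" for j :: nat
  proof (induction j)
    case 0 then show ?case using b0 by simp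
  next
    case (Suc j)
    have "q ^ Suc j \<le> q * b (d0 + real j * n)"
      using Suc q by simp
    also have "\<dots> < b (d0 + real j * n + n)"
      using fast n by simp
    finally show ?case by (simp add: algebra_simps)
  qed
  obtain j :: nat where "C * ((1 + d0) + real j * n) powr k < q ^ j"
    using exists_power_gt_polynomial[OF q n _ C k, of "1 + d0"] d0 by auto
  moreover have "b (d0 + real j * n) \<le> C * (1 + (d0 + real j * n)) powr k"
    using poly n by simp
  ultimately show False using grow[of j] by (simp add: add.assoc)
qed

lemma card_translate_diff_ball_le:
  fixes L :: "'a::group_add \<Rightarrow> real"
  assumes sub: "\<And>g h. L (g + h) \<le> L g + L h"
    and fin: "finite {g. L g \<le> d + n}" and h: "L h \<le> n" and n: "n > 0"
    and growth: "real (card {g. L g \<le> d + n}) \<le> (1 + 1 / n) * real (card {g. L g \<le> d})"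
  shows "real (card ((+) h ` {g. L g \<le> d} - {g. L g \<le> d})) \<le> real (card {g. L g \<le> d}) / n"
proof -
  have "(+) h ` {g. L g \<le> d} - {g. L g \<le> d} \<subseteq> {g. L g \<le> d + n} - {g. L g \<le> d}"
    using h by clarsimp (smt (verit) sub)
  then have "card ((+) h ` {g. L g \<le> d} - {g. L g \<le> d}) \<le> card ({g. L g \<le> d + n} - {g. L g \<le> d})"
    using fin by (intro card_mono) auto
  also have "\<dots> = card {g. L g \<le> d + n} - card {g. L g \<le> d}"
    using fin n by (intro card_Diff_subset) (auto elim: finite_subset[rotated])
  finally have "card ((+) h ` {g. L g \<le> d} - {g. L g \<le> d})
      \<le> card {g. L g \<le> d + n} - card {g. L g \<le> d}" .
  moreover have "card {g. L g \<le> d} \<le> card {g. L g \<le> d + n}"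
    using fin n by (intro card_mono) auto
  ultimately have "real (card ((+) h ` {g. L g \<le> d} - {g. L g \<le> d}))
      \<le> real (card {g. L g \<le> d + n}) - real (card {g. L g \<le> d})"
    by (metis of_nat_diff of_nat_le_iff)
  also have "\<dots> \<le> real (card {g. L g \<le> d}) / n"
    using growth n by (simp add: algebra_simps)
  finally show ?thesis .
qed

text \<open>Balls of radii along which the growth rate tends to \<open>1\<close> form a Folner sequence.\<close>
lemma amenable_if_polynomial_growth:
  fixes L :: "'a::group_add \<Rightarrow> real"
  assumes sub: "\<And>g h. L (g + h) \<le> L g + L h" and L0: "L 0 = 0"
    and fin: "\<And>d. finite {g. L g \<le> d}"
    and poly: "\<And>d. d \<ge> d0 \<Longrightarrow> real (card {g. L g \<le> d}) \<le> C * (1 + d) powr k"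
    and d0: "d0 \<ge> 0" and C: "C > 0" and k: "k \<ge> 0"
  shows "amenable TYPE('a)"
proof -
  define B where "B d = {g. L g \<le> d}" for d
  have card_B: "real (card (B d)) \<ge> 1" if "d \<ge> 0" for d
  proof -
    have "0 \<in> B d" using that L0 by (simp add: B_def)
    then show ?thesis using fin[of d] by (simp add: B_def Suc_le_eq card_gt_0_iff) blast
  qed
  have "\<exists>d\<ge>d0. real (card (B (d + (real m + 1)))) \<le> (1 + 1 / (real m + 1)) * real (card (B d))"
    for m :: nat
    using exists_radius_slow_growth[of "\<lambda>d. real (card (B d))" d0 C k "1 + 1 / (real m + 1)" "real m + 1"]
      card_B d0 poly C k unfolding B_def by fastforce
  then obtain d where d: "\<And>m. d m \<ge> d0"
    "\<And>m. real (card (B (d m + (real m + 1)))) \<le> (1 + 1 / (real m + 1)) * real (card (B (d m)))"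
    by metis
  show ?thesis
  proof (rule amenable_if_Folner_sequence[of "\<lambda>m. B (d m)"])
    show "finite (B (d m))" "B (d m) \<noteq> {}" for m
      using fin L0 d(1)[of m] d0 by (auto simp: B_def intro!: exI[of _ 0])
    fix h
    define r where "r m = real (card ((+) h ` B (d m) - B (d m))) / real (card (B (d m)))" for m
    have "\<bar>r m\<bar> \<le> inverse (real (Suc m))" if m: "L h \<le> real m + 1" for m
    proof -
      have pos: "real (card (B (d m))) \<ge> 1" using card_B d(1)[of m] d0 by simp
      have "real (card ((+) h ` B (d m) - B (d m))) \<le> real (card (B (d m))) / (real m + 1)"
        using card_translate_diff_ball_le[OF sub fin m, of "d m"] d(2)[of m] unfolding B_def by simp
      then show ?thesis
        using pos by (simp add: r_def divide_le_eq inverse_eq_divide field_simps)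
    qed
    moreover obtain N :: nat where "real N \<ge> L h" using real_arch_simple by blast
    then have "eventually (\<lambda>m. L h \<le> real m + 1) sequentially"
      unfolding eventually_sequentially
      by (metis add_increasing2 of_nat_le_iff order_trans zero_le_one)
    ultimately have "eventually (\<lambda>m. norm (r m) \<le> inverse (real (Suc m))) sequentially"
      by (auto elim: eventually_mono)
    then show "(r \<longlongrightarrow> 0) sequentially"
      by (rule Lim_null_comparison) (rule LIMSEQ_inverse_real_of_nat)
  qed
qed

section \<open>Finitely supported functions and the averaging operator\<close>

definition finsupp :: "('a \<Rightarrow> real) \<Rightarrow> bool" where
  "finsupp f \<longleftrightarrow> finite {x. f x \<noteq> 0}"

lemma infsum_eq_sum_if_zero_outside:
  fixes f :: "'a \<Rightarrow> 'b::{comm_monoid_add, t2_space}"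
  assumes "finite W" "\<And>x. x \<notin> W \<Longrightarrow> f x = 0"
  shows "infsum f UNIV = sum f W"
  using infsum_cong_neutral[of W UNIV f f] assms by simp

lemma summable_on_if_zero_outside:
  fixes f :: "'a \<Rightarrow> 'b::{comm_monoid_add, t2_space}"
  assumes "finite W" "\<And>x. x \<notin> W \<Longrightarrow> f x = 0"
  shows "f summable_on UNIV"
  using summable_on_cong_neutral[of W UNIV f f] assms by simp

lemma finsupp_summable: "finsupp f \<Longrightarrow> f summable_on UNIV"
  unfolding finsupp_def by (rule summable_on_if_zero_outside) auto

lemma finsupp_subset: "finsupp f \<Longrightarrow> (\<And>x. f x = 0 \<Longrightarrow> g x = 0) \<Longrightarrow> finsupp g"
  unfolding finsupp_def by (erule finite_subset[rotated]) auto

lemma finsupp_mult_left: "finsupp u \<Longrightarrow> finsupp (\<lambda>x. u x * v x)"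
  by (erule finsupp_subset) simp

lemma finsupp_mult_right: "finsupp v \<Longrightarrow> finsupp (\<lambda>x. u x * v x)"
  by (erule finsupp_subset) simp

lemma finsupp_sum: "finite I \<Longrightarrow> (\<And>i. i \<in> I \<Longrightarrow> finsupp (f i)) \<Longrightarrow> finsupp (\<lambda>x. \<Sum>i\<in>I. f i x)"
  unfolding finsupp_def
  by (rule finite_subset[of _ "\<Union>i\<in>I. {x. f i x \<noteq> 0}"]) (auto elim: sum.not_neutral_contains_not_neutral)

lemma finsupp_translate_right: "finsupp f \<Longrightarrow> finsupp (\<lambda>x. f (x + c))" for f :: "'a::group_add \<Rightarrow> real"
proof -
  assume "finsupp f"
  moreover have "{x. f (x + c) \<noteq> 0} = (\<lambda>y. y + - c) ` {y. f y \<noteq> 0}"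
    by (auto simp: image_iff add.assoc intro!: exI[of _ "_ + c"])
  ultimately show ?thesis unfolding finsupp_def by simp
qed

lemma infsum_sum_finsupp:
  assumes I: "finite I" and f: "\<And>i. i \<in> I \<Longrightarrow> finsupp (f i)"
  shows "infsum (\<lambda>x. \<Sum>i\<in>I. f i x) UNIV = (\<Sum>i\<in>I. infsum (f i) UNIV)"
proof -
  define W where "W = (\<Union>i\<in>I. {x. f i x \<noteq> 0})"
  have W: "finite W" unfolding W_def using I f by (auto simp: finsupp_def)
  have zero: "f i x = 0" if "i \<in> I" "x \<notin> W" for i x using that by (auto simp: W_def)
  have "infsum (\<lambda>x. \<Sum>i\<in>I. f i x) UNIV = (\<Sum>x\<in>W. \<Sum>i\<in>I. f i x)"
    by (rule infsum_eq_sum_if_zero_outside[OF W]) (simp add: zero)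
  also have "\<dots> = (\<Sum>i\<in>I. \<Sum>x\<in>W. f i x)" by (rule sum.swap)
  also have "\<dots> = (\<Sum>i\<in>I. infsum (f i) UNIV)"
    by (intro sum.cong refl infsum_eq_sum_if_zero_outside[OF W, symmetric]) (simp add: zero)
  finally show ?thesis .
qed

lemma infsum_translate_left: "infsum (\<lambda>x. f (c + x)) UNIV = infsum f (UNIV :: 'a::group_add set)"
proof -
  have "bij_betw (\<lambda>x. c + x) UNIV (UNIV :: 'a set)"
    by (rule bij_betwI[of _ _ _ "\<lambda>y. - c + y"]) (auto simp: add.assoc[symmetric])
  then show ?thesis by (rule infsum_reindex_bij_betw)
qed

lemma infsum_translate_right: "infsum (\<lambda>x. f (x + c)) UNIV = infsum f (UNIV :: 'a::group_add set)"
proof -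
  have "bij_betw (\<lambda>x. x + c) UNIV (UNIV :: 'a set)"
    by (rule bij_betwI[of _ _ _ "\<lambda>y. y + - c"]) (auto simp: add.assoc)
  then show ?thesis by (rule infsum_reindex_bij_betw)
qed

definition l2_inner :: "('a \<Rightarrow> real) \<Rightarrow> ('a \<Rightarrow> real) \<Rightarrow> real" where
  "l2_inner u v = infsum (\<lambda>x. u x * v x) UNIV"

lemma l2_inner_self_pos:
  assumes "finsupp f" "f y \<noteq> 0"
  shows "l2_inner f f > 0"
proof -
  have "f y * f y \<le> l2_inner f f"
    using finite_sum_le_infsum[OF finsupp_summable[OF finsupp_mult_left[OF assms(1)]], of "{y}"]
    by (simp add: l2_inner_def)
  moreover have "f y * f y > 0" using assms(2) not_real_square_gt_zero by blast
  ultimately show ?thesis by simp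
qed

lemma l2_inner_Cauchy_Schwarz:
  assumes u: "finsupp u" and v: "finsupp v"
  shows "(l2_inner u v)\<^sup>2 \<le> l2_inner u u * l2_inner v v"
proof -
  define W where "W = {x. u x \<noteq> 0} \<union> {x. v x \<noteq> 0}"
  have W: "finite W" using u v by (auto simp: W_def finsupp_def)
  have "l2_inner u v = (\<Sum>x\<in>W. u x * v x)" "l2_inner u u = (\<Sum>x\<in>W. (u x)\<^sup>2)"
    "l2_inner v v = (\<Sum>x\<in>W. (v x)\<^sup>2)"
    unfolding l2_inner_def power2_eq_square
    by (rule infsum_eq_sum_if_zero_outside[OF W], simp add: W_def)+
  then show ?thesis by (simp add: Cauchy_Schwarz_ineq_sum)
qed

lemma l2_inner_indicator_zero: "l2_inner (indicator {0}) w = w 0"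
  unfolding l2_inner_def by (subst infsum_eq_sum_if_zero_outside[of "{0}"]) auto

definition avg_op :: "'a::group_add set \<Rightarrow> ('a \<Rightarrow> real) \<Rightarrow> 'a \<Rightarrow> real" where
  "avg_op S f x = (\<Sum>g\<in>S. f (- g + x)) / real (card S)"

lemma avg_op_nonneg: "(\<And>x. f x \<ge> 0) \<Longrightarrow> avg_op S f x \<ge> 0"
  unfolding avg_op_def by (auto intro!: divide_nonneg_nonneg sum_nonneg)

lemma avg_op_pow_nonneg: "(\<And>x. f x \<ge> 0) \<Longrightarrow> (avg_op S ^^ n) f x \<ge> 0"
  by (induction n arbitrary: x) (auto intro: avg_op_nonneg)

lemma avg_op_pos:
  assumes S: "finite S" "S \<noteq> {}" and f: "\<And>x. f x \<ge> 0" and y: "f y > 0"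
  shows "\<exists>x. avg_op S f x > 0"
proof -
  obtain s where s: "s \<in> S" using S by auto
  have "f (- s + (s + y)) \<le> (\<Sum>g\<in>S. f (- g + (s + y)))"
    by (rule member_le_sum[OF s]) (use f S in auto)
  then have "avg_op S f (s + y) > 0"
    using y S by (simp add: avg_op_def add.assoc[symmetric] card_gt_0_iff)
  then show ?thesis ..
qed

lemma avg_op_pow_pos:
  assumes S: "finite S" "S \<noteq> {}" and f: "\<And>x. f x \<ge> 0" and y: "f y > 0"
  shows "\<exists>x. (avg_op S ^^ n) f x > 0"
proof (induction n)
  case 0 then show ?case using y by auto
next
  case (Suc n)
  then show ?case using avg_op_pos[OF S avg_op_pow_nonneg[OF f]] by auto
qed

lemma finsupp_avg_op:
  assumes S: "finite S" and f: "finsupp f"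
  shows "finsupp (avg_op S f)"
proof -
  have "{x. avg_op S f x \<noteq> 0} \<subseteq> (\<lambda>(g, y). g + y) ` (S \<times> {y. f y \<noteq> 0})"
  proof
    fix x assume "x \<in> {x. avg_op S f x \<noteq> 0}"
    then obtain g where "g \<in> S" "f (- g + x) \<noteq> 0"
      by (auto simp: avg_op_def elim: sum.not_neutral_contains_not_neutral)
    then show "x \<in> (\<lambda>(g, y). g + y) ` (S \<times> {y. f y \<noteq> 0})"
      by (intro image_eqI[of _ _ "(g, - g + x)"]) (auto simp: add.assoc[symmetric])
  qed
  moreover have "finite ((\<lambda>(g, y). g + y) ` (S \<times> {y. f y \<noteq> 0}))"
    using S f by (auto simp: finsupp_def)
  ultimately show ?thesis unfolding finsupp_def by (rule finite_subset)
qed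

lemma finsupp_avg_op_pow: "finite S \<Longrightarrow> finsupp f \<Longrightarrow> finsupp ((avg_op S ^^ n) f)"
  by (induction n) (auto intro: finsupp_avg_op)

lemma avg_op_translate_right: "avg_op S (\<lambda>x. f (x + c)) = (\<lambda>x. avg_op S f (x + c))"
  unfolding avg_op_def by (simp add: add.assoc)

lemma avg_op_pow_translate_right: "(avg_op S ^^ n) (\<lambda>x. f (x + c)) = (\<lambda>x. (avg_op S ^^ n) f (x + c))"
  by (induction n) (simp_all add: avg_op_translate_right)

lemma avg_op_pow_linear:
  assumes "finite K"
  shows "(avg_op S ^^ n) (\<lambda>x. \<Sum>y\<in>K. c y * f y x) = (\<lambda>x. \<Sum>y\<in>K. c y * (avg_op S ^^ n) (f y) x)"
proof (induction n)
  case 0 then show ?case by simp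
next
  case (Suc n)
  then show ?case
    by (simp add: avg_op_def fun_eq_iff sum_divide_distrib sum_distrib_left sum.swap[of _ K])
qed

lemma avg_op_pow_expand:
  assumes K: "finite K" and g: "\<And>x. x \<notin> K \<Longrightarrow> g x = 0"
  shows "(avg_op S ^^ n) g = (\<lambda>x. \<Sum>y\<in>K. g y * (avg_op S ^^ n) (indicator {0}) (x + - y))"
proof -
  have "g = (\<lambda>x. \<Sum>y\<in>K. g y * indicator {0} (x + - y))"
  proof
    fix x
    have "(\<Sum>y\<in>K. g y * indicator {0} (x + - y)) = (\<Sum>y\<in>K. if y = x then g y else 0)"
      by (rule sum.cong) (auto simp: indicator_def)
    then show "g x = (\<Sum>y\<in>K. g y * indicator {0} (x + - y))"
      using K g by (cases "x \<in> K") auto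
  qed
  then have "(avg_op S ^^ n) g = (avg_op S ^^ n) (\<lambda>x. \<Sum>y\<in>K. g y * indicator {0} (x + - y))"
    by simp
  also have "\<dots> = (\<lambda>x. \<Sum>y\<in>K. g y * (avg_op S ^^ n) (indicator {0}) (x + - y))"
    by (simp only: avg_op_pow_linear[OF K] avg_op_pow_translate_right)
  finally show ?thesis .
qed

lemma avg_op_self_adjoint:
  assumes S: "finite S" and sym: "\<And>g. g \<in> S \<Longrightarrow> - g \<in> S"
    and u: "finsupp u" and v: "finsupp v"
  shows "l2_inner (avg_op S u) v = l2_inner u (avg_op S v)"
proof -
  define G where "G g = infsum (\<lambda>y. u y * v (g + y)) UNIV" for g
  have "l2_inner (avg_op S u) v = infsum (\<lambda>x. (\<Sum>g\<in>S. u (- g + x) * v x) / card S) UNIV"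
    unfolding l2_inner_def avg_op_def by (simp add: sum_distrib_right)
  also have "\<dots> = infsum (\<lambda>x. \<Sum>g\<in>S. u (- g + x) * v x) UNIV / card S"
    by (simp add: divide_inverse infsum_cmult_left')
  also have "\<dots> = (\<Sum>g\<in>S. infsum (\<lambda>x. u (- g + x) * v x) UNIV) / card S"
    by (subst infsum_sum_finsupp[OF S]) (auto intro: finsupp_mult_right[OF v])
  also have "\<dots> = (\<Sum>g\<in>S. G g) / card S"
  proof -
    have "infsum (\<lambda>x. u (- g + x) * v x) UNIV = G g" for g
      using infsum_translate_left[of "\<lambda>x. u (- g + x) * v x" g] by (simp add: G_def add.assoc[symmetric])
    then show ?thesis by simp
  qed
  also have "(\<Sum>g\<in>S. G g) = (\<Sum>g\<in>S. G (- g))"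
  proof -
    have "uminus ` S = S" using sym by (auto simp: image_iff intro!: bexI[of _ "- _"])
    then show ?thesis
      using sum.reindex[of uminus S G] by (simp add: inj_on_def o_def)
  qed
  also have "(\<Sum>g\<in>S. G (- g)) / card S = infsum (\<lambda>y. \<Sum>g\<in>S. u y * v (- g + y)) UNIV / card S"
    by (subst infsum_sum_finsupp[OF S]) (auto simp: G_def intro: finsupp_mult_left[OF u])
  also have "\<dots> = infsum (\<lambda>y. (\<Sum>g\<in>S. u y * v (- g + y)) / card S) UNIV"
    by (simp add: divide_inverse infsum_cmult_left')
  also have "\<dots> = l2_inner u (avg_op S v)"
    unfolding l2_inner_def avg_op_def by (simp add: sum_distrib_left)
  finally show ?thesis .
qed

lemma avg_op_pow_self_adjoint:
  assumes S: "finite_symmetric S" and u: "finsupp u" and v: "finsupp v"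
  shows "l2_inner ((avg_op S ^^ n) u) v = l2_inner u ((avg_op S ^^ n) v)"
  using v
proof (induction n arbitrary: v)
  case 0 then show ?case by simp
next
  case (Suc n)
  have fin: "finite S" using S by (simp add: finite_symmetric_def)
  have "l2_inner ((avg_op S ^^ Suc n) u) v = l2_inner ((avg_op S ^^ n) u) (avg_op S v)"
    using S Suc.prems by (simp add: avg_op_self_adjoint finsupp_avg_op_pow finite_symmetric_def u)
  also have "\<dots> = l2_inner u ((avg_op S ^^ n) (avg_op S v))"
    using Suc.IH[OF finsupp_avg_op[OF fin Suc.prems]] .
  finally show ?case by (simp add: funpow_swap1)
qed

lemma finsupp_indicator_zero: "finsupp (indicator {0})"
  by (simp add: finsupp_def indicator_def)

lemma l2_inner_avg_op_pow_indicator_zero: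
  assumes S: "finite_symmetric S"
  shows "l2_inner ((avg_op S ^^ n) (indicator {0})) ((avg_op S ^^ n) (indicator {0}))
           = (avg_op S ^^ (2 * n)) (indicator {0}) 0"
proof -
  have fin: "finite S" using S by (simp add: finite_symmetric_def)
  have "l2_inner ((avg_op S ^^ n) (indicator {0})) ((avg_op S ^^ n) (indicator {0}))
          = l2_inner (indicator {0}) ((avg_op S ^^ n) ((avg_op S ^^ n) (indicator {0})))"
    by (intro avg_op_pow_self_adjoint S finsupp_indicator_zero finsupp_avg_op_pow fin)
  also have "(avg_op S ^^ n) ((avg_op S ^^ n) (indicator {0})) = (avg_op S ^^ (2 * n)) (indicator {0})"
    by (simp add: funpow_add mult_2)
  finally show ?thesis by (simp add: l2_inner_indicator_zero)
qed

lemma l2_norm_avg_op_pow_log_convex: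
  assumes S: "finite_symmetric S" and g: "finsupp g"
  shows "(l2_inner ((avg_op S ^^ Suc k) g) ((avg_op S ^^ Suc k) g))\<^sup>2
           \<le> l2_inner ((avg_op S ^^ k) g) ((avg_op S ^^ k) g)
             * l2_inner ((avg_op S ^^ Suc (Suc k)) g) ((avg_op S ^^ Suc (Suc k)) g)"
proof -
  have fin: "finite S" and sym: "\<And>g. g \<in> S \<Longrightarrow> - g \<in> S"
    using S by (simp_all add: finite_symmetric_def)
  have "l2_inner (avg_op S ((avg_op S ^^ k) g)) ((avg_op S ^^ Suc k) g)
          = l2_inner ((avg_op S ^^ k) g) (avg_op S ((avg_op S ^^ Suc k) g))"
    by (intro avg_op_self_adjoint fin sym finsupp_avg_op_pow g)
  then have "l2_inner ((avg_op S ^^ Suc k) g) ((avg_op S ^^ Suc k) g)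
          = l2_inner ((avg_op S ^^ k) g) ((avg_op S ^^ Suc (Suc k)) g)"
    by (simp only: funpow.simps o_apply)
  then show ?thesis
    by (simp only:) (intro l2_inner_Cauchy_Schwarz finsupp_avg_op_pow fin g)
qed

lemma log_convex_power_le:
  fixes m :: "nat \<Rightarrow> real"
  assumes pos: "\<And>k. m k > 0" and log_convex: "\<And>k. (m (Suc k))\<^sup>2 \<le> m k * m (Suc (Suc k))"
  shows "m 0 * m 1 ^ n \<le> m 0 ^ n * m n"
proof -
  have ratio_mono: "m 1 * m k \<le> m 0 * m (Suc k)" for k
  proof (induction k)
    case 0 then show ?case by simp
  next
    case (Suc k)
    have "m 1 * m k * m (Suc k) \<le> m 0 * m (Suc k) * m (Suc k)"
      using Suc pos[of "Suc k"] by (intro mult_right_mono) auto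
    then have "m k * (m 1 * m (Suc k)) \<le> m 0 * (m (Suc k))\<^sup>2"
      by (simp add: power2_eq_square algebra_simps)
    also have "\<dots> \<le> m k * (m 0 * m (Suc (Suc k)))"
      using mult_left_mono[OF log_convex[of k], of "m 0"] pos[of 0] by (simp add: algebra_simps)
    finally show ?case using pos[of k] by (simp add: mult_le_cancel_left_pos)
  qed
  show ?thesis
  proof (induction n)
    case 0 then show ?case by simp
  next
    case (Suc n)
    have "m 0 * m 1 ^ Suc n = m 1 * (m 0 * m 1 ^ n)" by simp
    also have "\<dots> \<le> m 0 ^ n * (m 1 * m n)"
      using mult_left_mono[OF Suc, of "m 1"] pos[of 1] by simp
    also have "\<dots> \<le> m 0 ^ Suc n * m (Suc n)"
      using mult_left_mono[OF ratio_mono[of n], of "m 0 ^ n"] pos[of 0] by simp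
    finally show ?case .
  qed
qed

lemma le_if_power_le_const_mult_power:
  fixes a b C :: real
  assumes a: "a > 0" and b: "b \<ge> 0" and le: "\<And>n. a ^ n \<le> C * b ^ n"
  shows "a \<le> b"
proof (rule ccontr)
  assume "\<not> a \<le> b"
  then have "b > 0" using le[of 1] a b by (cases "b = 0") auto
  then have "a / b > 1" using \<open>\<not> a \<le> b\<close> by simp
  then obtain n where "C < (a / b) ^ n" using real_arch_pow by blast
  moreover have "(a / b) ^ n \<le> C" using le[of n] \<open>b > 0\<close> by (simp add: power_divide divide_le_eq)
  ultimately show False by simp
qed

text \<open>Expanding \<open>g\<close> in translates of the Dirac mass and applying Cauchy-Schwarz pointwise.\<close>
lemma avg_op_pow_l2_le_return:
  assumes S: "finite_symmetric S" and K: "finite K" and g: "\<And>x. x \<notin> K \<Longrightarrow> g x = 0"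
  shows "l2_inner ((avg_op S ^^ n) g) ((avg_op S ^^ n) g)
           \<le> real (card K) * l2_inner g g * (avg_op S ^^ (2 * n)) (indicator {0}) 0"
proof -
  define T where "T = avg_op S"
  define u where "u = (T ^^ n) (indicator {0})"
  have fin: "finite S" using S by (simp add: finite_symmetric_def)
  have g_finsupp: "finsupp g" unfolding finsupp_def by (rule finite_subset[OF _ K]) (use g in auto)
  have u: "finsupp u" unfolding u_def T_def by (rule finsupp_avg_op_pow[OF fin finsupp_indicator_zero])
  have u_sq: "finsupp (\<lambda>x. u (x + - y) * u (x + - y))" for y
    by (rule finsupp_mult_left, rule finsupp_translate_right[OF u])
  have gg: "l2_inner g g = (\<Sum>y\<in>K. (g y)\<^sup>2)"
    unfolding l2_inner_def power2_eq_square by (rule infsum_eq_sum_if_zero_outside[OF K]) (simp add: g)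
  have pointwise: "(T ^^ n) g x * (T ^^ n) g x \<le> l2_inner g g * (\<Sum>y\<in>K. u (x + - y) * u (x + - y))" for x
  proof -
    have "(T ^^ n) g = (\<lambda>x. \<Sum>y\<in>K. g y * u (x + - y))"
      unfolding T_def u_def by (rule avg_op_pow_expand[OF K g])
    then have "(T ^^ n) g x = (\<Sum>y\<in>K. g y * u (x + - y))"
      by (rule fun_cong)
    then have "(T ^^ n) g x * (T ^^ n) g x = (\<Sum>y\<in>K. g y * u (x + - y))\<^sup>2"
      by (simp only: power2_eq_square)
    also have "\<dots> \<le> (\<Sum>y\<in>K. (g y)\<^sup>2) * (\<Sum>y\<in>K. (u (x + - y))\<^sup>2)"
      by (rule Cauchy_Schwarz_ineq_sum)
    finally show ?thesis by (simp add: gg power2_eq_square)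
  qed
  have "l2_inner ((T ^^ n) g) ((T ^^ n) g)
          \<le> infsum (\<lambda>x. l2_inner g g * (\<Sum>y\<in>K. u (x + - y) * u (x + - y))) UNIV"
    unfolding l2_inner_def[of "(T ^^ n) g"]
  proof (rule infsum_mono[OF _ _ pointwise])
    show "(\<lambda>x. (T ^^ n) g x * (T ^^ n) g x) summable_on UNIV"
      unfolding T_def by (intro finsupp_summable finsupp_mult_left finsupp_avg_op_pow fin g_finsupp)
    show "(\<lambda>x. l2_inner g g * (\<Sum>y\<in>K. u (x + - y) * u (x + - y))) summable_on UNIV"
      by (intro finsupp_summable finsupp_mult_right finsupp_sum K u_sq)
  qed
  also have "\<dots> = l2_inner g g * (\<Sum>y\<in>K. infsum (\<lambda>x. u (x + - y) * u (x + - y)) UNIV)"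
    using infsum_sum_finsupp[OF K u_sq] by (simp only: infsum_cmult_right')
  also have "\<dots> = l2_inner g g * (real (card K) * l2_inner u u)"
  proof -
    have "infsum (\<lambda>x. u (x + - y) * u (x + - y)) UNIV = l2_inner u u" for y
      unfolding l2_inner_def by (rule infsum_translate_right[of "\<lambda>x. u x * u x"])
    then show ?thesis by simp
  qed
  also have "l2_inner u u = (T ^^ (2 * n)) (indicator {0}) 0"
    unfolding u_def T_def by (rule l2_inner_avg_op_pow_indicator_zero[OF S])
  finally show ?thesis by (simp add: T_def mult_ac)
qed

text \<open>Spectral radius argument: the norms \<open>\<parallel>T\<^sup>k g\<parallel>\<^sup>2\<close> are log-convex by self-adjointness,
  while they grow at most like \<open>\<theta>\<^sup>2\<^sup>k\<close> by the bound on return probabilities.\<close>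
lemma avg_op_l2_le_return_rate:
  assumes S: "finite_symmetric S" "S \<noteq> {}" and \<theta>: "\<theta> \<ge> 0"
    and return: "\<And>n. (avg_op S ^^ n) (indicator {0}) 0 \<le> \<theta> ^ n"
    and g: "finsupp g" and g_nonneg: "\<And>x. g x \<ge> 0"
  shows "l2_inner (avg_op S g) (avg_op S g) \<le> \<theta>\<^sup>2 * l2_inner g g"
proof (cases "\<forall>x. g x = 0")
  case True
  then show ?thesis by (simp add: l2_inner_def avg_op_def)
next
  case False
  then obtain y where y: "g y > 0" using g_nonneg by (metis less_eq_real_def)
  have fin: "finite S" using S by (simp add: finite_symmetric_def)
  define m where "m k = l2_inner ((avg_op S ^^ k) g) ((avg_op S ^^ k) g)" for k
  have pos: "m k > 0" for k
  proof -
    obtain x where "(avg_op S ^^ k) g x > 0"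
      using avg_op_pow_pos[of S g y k] fin S(2) g_nonneg y by blast
    then show ?thesis
      unfolding m_def by (intro l2_inner_self_pos[where y=x] finsupp_avg_op_pow fin g) auto
  qed
  have log_convex: "(m (Suc k))\<^sup>2 \<le> m k * m (Suc (Suc k))" for k
    unfolding m_def by (rule l2_norm_avg_op_pow_log_convex[OF S(1) g])
  define K where "K = {x. g x \<noteq> 0}"
  have K: "finite K" using g by (simp add: K_def finsupp_def)
  have growth: "m n \<le> real (card K) * m 0 * (\<theta>\<^sup>2) ^ n" for n
  proof -
    have "m n \<le> real (card K) * m 0 * (avg_op S ^^ (2 * n)) (indicator {0}) 0"
      unfolding m_def using avg_op_pow_l2_le_return[OF S(1) K] by (simp add: K_def)
    also have "\<dots> \<le> real (card K) * m 0 * \<theta> ^ (2 * n)"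
      using return[of "2 * n"] pos[of 0] by (intro mult_left_mono) auto
    finally show ?thesis by (simp add: power_mult)
  qed
  have "m 1 ^ n \<le> real (card K) * (m 0 * \<theta>\<^sup>2) ^ n" for n
  proof -
    have "m 0 * m 1 ^ n \<le> m 0 ^ n * m n"
      using pos log_convex by (rule log_convex_power_le)
    also have "\<dots> \<le> m 0 ^ n * (real (card K) * m 0 * (\<theta>\<^sup>2) ^ n)"
      using growth[of n] pos[of 0] by (intro mult_left_mono) auto
    also have "\<dots> = m 0 * (real (card K) * (m 0 * \<theta>\<^sup>2) ^ n)"
      by (simp add: power_mult_distrib)
    finally show ?thesis using pos[of 0] by (simp add: mult_le_cancel_left_pos)
  qed
  moreover have "m 0 * \<theta>\<^sup>2 \<ge> 0" using pos[of 0] by simp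
  ultimately have "m 1 \<le> m 0 * \<theta>\<^sup>2"
    using le_if_power_le_const_mult_power[OF pos[of 1]] by blast
  then show ?thesis by (simp add: m_def mult.commute)
qed

section \<open>Convolution by normalized indicators\<close>

lemma lp_norm_eq_sum_if_zero_outside:
  assumes "finite W" "\<And>x. x \<notin> W \<Longrightarrow> f x = 0" "p \<noteq> 0"
  shows "lp_norm p f = (\<Sum>x\<in>W. norm (f x) powr p) powr (1 / p)"
  unfolding lp_norm_def using assms by (subst infsum_eq_sum_if_zero_outside[of W]) auto

lemma in_lp_if_zero_outside:
  assumes "finite W" "\<And>x. x \<notin> W \<Longrightarrow> f x = 0" "p \<noteq> 0"
  shows "in_lp p f"
  unfolding in_lp_def using assms by (intro summable_on_if_zero_outside[of W]) auto

lemma lp_norm_le_if_finite_sums_le: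
  fixes h :: "'a \<Rightarrow> complex"
  assumes p: "p > 0" and B: "B \<ge> 0"
    and sums: "\<And>X. finite X \<Longrightarrow> (\<Sum>x\<in>X. norm (h x) powr p) \<le> B"
  shows "lp_norm p h \<le> B powr (1 / p)"
proof -
  have "infsum (\<lambda>x. norm (h x) powr p) UNIV \<le> B"
  proof (cases "(\<lambda>x. norm (h x) powr p) summable_on UNIV")
    case True then show ?thesis by (rule infsum_le_finite_sums) (use sums in auto)
  next
    case False then show ?thesis using B by (simp add: infsum_not_exists)
  qed
  moreover have "infsum (\<lambda>x. norm (h x) powr p) UNIV \<ge> 0" by (rule infsum_nonneg) simp
  ultimately show ?thesis unfolding lp_norm_def using p by (intro powr_mono2) auto
qed

lemma lp_norm_le_one_imp_infsum_le_one:
  assumes "lp_norm p f \<le> 1" "p > 0"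
  shows "infsum (\<lambda>x. norm (f x) powr p) UNIV \<le> 1"
proof -
  define I where "I = infsum (\<lambda>x. norm (f x) powr p) UNIV"
  have "I \<ge> 0" unfolding I_def by (rule infsum_nonneg) simp
  moreover have "(I powr (1 / p)) powr p \<le> 1"
    using assms powr_mono2[of p "I powr (1 / p)" 1] by (simp add: I_def lp_norm_def)
  ultimately show ?thesis using assms(2) by (simp add: I_def powr_powr)
qed

lemma lp_norm_nonneg: "lp_norm p f \<ge> 0"
  unfolding lp_norm_def by simp

lemma lp_norm_mult:
  fixes f :: "'a \<Rightarrow> complex"
  assumes p: "p > 0"
  shows "lp_norm p (\<lambda>x. c * f x) = norm c * lp_norm p f"
proof -
  have "lp_norm p (\<lambda>x. c * f x) = (norm c powr p) powr (1 / p) * lp_norm p f"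
    unfolding lp_norm_def by (simp add: norm_mult powr_mult infsum_cmult_right')
  also have "(norm c powr p) powr (1 / p) = norm c" using p by (simp add: powr_powr)
  finally show ?thesis .
qed

lemma in_lp_mult: "in_lp p f \<Longrightarrow> in_lp p (\<lambda>x. c * f x)"
  unfolding in_lp_def by (simp add: norm_mult powr_mult summable_on_cmult_right)

lemma conv_mult_right: "conv a (\<lambda>x. c * f x) = (\<lambda>x. c * conv a f x)"
  unfolding conv_def by (auto simp: fun_eq_iff sum_distrib_left algebra_simps)

lemma op_norm_ge:
  assumes bound: "\<And>f. in_lp p f \<Longrightarrow> lp_norm p f \<le> 1 \<Longrightarrow> lp_norm p (conv a f) \<le> B"
    and f: "in_lp p f" "lp_norm p f \<le> 1"
  shows "lp_norm p (conv a f) \<le> op_norm p a"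
  unfolding op_norm_def by (rule cSup_upper) (use bound f in \<open>auto simp: bdd_above_def\<close>)

lemma op_norm_le:
  assumes "\<And>f. in_lp p f \<Longrightarrow> lp_norm p f \<le> 1 \<Longrightarrow> lp_norm p (conv a f) \<le> c"
  shows "op_norm p a \<le> c"
  unfolding op_norm_def
proof (rule cSup_least)
  have "in_lp p (\<lambda>_. 0)" by (simp add: in_lp_def)
  then show "{lp_norm p (conv a f) | f. in_lp p f \<and> lp_norm p f \<le> 1} \<noteq> {}"
    by (auto simp: lp_norm_def)
qed (use assms in blast)

definition normalized_indicator :: "'a set \<Rightarrow> 'a \<Rightarrow> complex" where
  "normalized_indicator S g = (if g \<in> S then complex_of_real (1 / real (card S)) else 0)"

lemma rho_eq_op_norm: "rho S = op_norm 2 (normalized_indicator S)"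
  unfolding rho_def normalized_indicator_def by (simp add: fun_eq_iff)

context
  fixes S :: "'a::group_add set"
  assumes fin: "finite S" and ne: "S \<noteq> {}"
begin

lemma real_card_pos: "real (card S) > 0"
  using fin ne by (simp add: card_gt_0_iff)

lemma supp_normalized_indicator: "supp (normalized_indicator S) = S"
  using fin ne unfolding supp_def normalized_indicator_def by (auto simp: card_gt_0_iff)

lemma conv_normalized_indicator:
  "conv (normalized_indicator S) f x = complex_of_real (1 / real (card S)) * (\<Sum>g\<in>S. f (- g + x))"
  unfolding conv_def supp_normalized_indicator by (simp add: normalized_indicator_def sum_distrib_left)

lemma conv_normalized_indicator_of_real:
  "conv (normalized_indicator S) (\<lambda>x. complex_of_real (h x)) = (\<lambda>x. complex_of_real (avg_op S h x))"
  by (auto simp: fun_eq_iff conv_normalized_indicator avg_op_def divide_inverse)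

lemma norm_conv_normalized_indicator_le:
  "norm (conv (normalized_indicator S) f x) \<le> avg_op S (\<lambda>y. norm (f y)) x"
proof -
  have "norm (conv (normalized_indicator S) f x) = norm (\<Sum>g\<in>S. f (- g + x)) / real (card S)"
    by (simp add: conv_normalized_indicator norm_mult norm_divide)
  also have "\<dots> \<le> (\<Sum>g\<in>S. norm (f (- g + x))) / real (card S)"
    by (intro divide_right_mono norm_sum) simp
  finally show ?thesis by (simp add: avg_op_def)
qed

lemma norm_conv_normalized_indicator_powr_le:
  assumes p: "p > 0"
  shows "norm (conv (normalized_indicator S) f x) powr p \<le> (\<Sum>g\<in>S. norm (f (- g + x)) powr p)"
proof -
  define M where "M = (\<Sum>g\<in>S. norm (f (- g + x)) powr p)"
  have "norm (f (- g + x)) \<le> M powr (1 / p)" if g: "g \<in> S" for g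
  proof -
    have "norm (f (- g + x)) powr p \<le> M"
      unfolding M_def by (rule member_le_sum[OF g]) (use fin in auto)
    then have "(norm (f (- g + x)) powr p) powr (1 / p) \<le> M powr (1 / p)"
      using p by (intro powr_mono2) auto
    then show ?thesis using p by (simp add: powr_powr)
  qed
  then have "avg_op S (\<lambda>y. norm (f y)) x \<le> M powr (1 / p)"
    using sum_mono[of S "\<lambda>g. norm (f (- g + x))" "\<lambda>_. M powr (1 / p)"] real_card_pos
    by (simp add: avg_op_def divide_le_eq mult.commute)
  then have "norm (conv (normalized_indicator S) f x) powr p \<le> (M powr (1 / p)) powr p"
    using p norm_conv_normalized_indicator_le[of f x] by (intro powr_mono2) auto
  also have "\<dots> = M" using p by (simp add: M_def powr_powr sum_nonneg)
  finally show ?thesis unfolding M_def .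
qed

lemma lp_norm_conv_normalized_indicator_le_card:
  assumes p: "p > 0" and f: "in_lp p f" "lp_norm p f \<le> 1"
  shows "lp_norm p (conv (normalized_indicator S) f) \<le> real (card S) powr (1 / p)"
proof (rule lp_norm_le_if_finite_sums_le[OF p])
  define I where "I = infsum (\<lambda>x. norm (f x) powr p) UNIV"
  have I: "I \<le> 1" unfolding I_def by (rule lp_norm_le_one_imp_infsum_le_one[OF f(2) p])
  have summable: "(\<lambda>x. norm (f x) powr p) summable_on UNIV" using f(1) by (simp add: in_lp_def)
  fix X :: "'a set" assume X: "finite X"
  have "(\<Sum>x\<in>X. norm (conv (normalized_indicator S) f x) powr p)
          \<le> (\<Sum>g\<in>S. \<Sum>x\<in>X. norm (f (- g + x)) powr p)"
    using sum_mono[OF norm_conv_normalized_indicator_powr_le[OF p]] by (simp add: sum.swap[of _ S])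
  also have "\<dots> \<le> (\<Sum>g\<in>S. I)"
  proof (rule sum_mono)
    fix g
    have "(\<Sum>x\<in>X. norm (f (- g + x)) powr p) = (\<Sum>y\<in>(+) (- g) ` X. norm (f y) powr p)"
      by (simp add: sum.reindex inj_on_def)
    also have "\<dots> \<le> I" unfolding I_def by (rule finite_sum_le_infsum[OF summable]) (use X in auto)
    finally show "(\<Sum>x\<in>X. norm (f (- g + x)) powr p) \<le> I" .
  qed
  also have "\<dots> \<le> real (card S)" using I by (simp add: mult_left_le)
  finally show "(\<Sum>x\<in>X. norm (conv (normalized_indicator S) f x) powr p) \<le> real (card S)" .
qed simp

lemma lp_norm_conv_normalized_indicator_le_op_norm:
  assumes p: "p > 0" and f: "in_lp p f" "lp_norm p f \<le> 1"
  shows "lp_norm p (conv (normalized_indicator S) f) \<le> op_norm p (normalized_indicator S)"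
  using op_norm_ge[OF lp_norm_conv_normalized_indicator_le_card[OF p] f] .

lemma op_norm_normalized_indicator_nonneg:
  assumes p: "p > 0"
  shows "op_norm p (normalized_indicator S) \<ge> 0"
proof -
  have "lp_norm p (conv (normalized_indicator S) (\<lambda>_. 0)) \<le> op_norm p (normalized_indicator S)"
    by (rule lp_norm_conv_normalized_indicator_le_op_norm[OF p]) (simp_all add: in_lp_def lp_norm_def)
  then show ?thesis by (meson lp_norm_nonneg order_trans)
qed

lemma lp_norm_conv_normalized_indicator_le_op_norm_mult:
  assumes p: "p > 0" and W: "finite W" and zero: "\<And>x. x \<notin> W \<Longrightarrow> f x = 0"
  shows "lp_norm p (conv (normalized_indicator S) f)
           \<le> op_norm p (normalized_indicator S) * lp_norm p f"
proof (cases "lp_norm p f = 0")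
  case True
  then have "\<forall>x\<in>W. norm (f x) powr p = 0"
    using lp_norm_eq_sum_if_zero_outside[OF W zero] p W by (simp add: sum_nonneg_eq_0_iff)
  then have "f = (\<lambda>_. 0)" using zero by (auto simp: fun_eq_iff)
  then show ?thesis by (simp add: conv_def lp_norm_def)
next
  case False
  define c where "c = lp_norm p f"
  have c: "c > 0" using False lp_norm_nonneg[of p f] unfolding c_def by simp
  define v where "v x = complex_of_real (1 / c) * f x" for x
  have "lp_norm p v = 1"
    using c lp_norm_mult[OF p, of "complex_of_real (1 / c)" f] unfolding v_def c_def
    by (simp add: norm_divide)
  moreover have "in_lp p f" using in_lp_if_zero_outside[OF W zero] p by simp
  then have "in_lp p v" unfolding v_def by (rule in_lp_mult)
  ultimately have "lp_norm p (conv (normalized_indicator S) v) \<le> op_norm p (normalized_indicator S)"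
    by (intro lp_norm_conv_normalized_indicator_le_op_norm p) auto
  moreover have "lp_norm p (conv (normalized_indicator S) v) = lp_norm p (conv (normalized_indicator S) f) / c"
    unfolding v_def conv_mult_right lp_norm_mult[OF p] using c by (simp add: norm_divide)
  ultimately show ?thesis using c unfolding c_def by (simp add: divide_le_eq mult.commute)
qed

text \<open>The return probability \<open>\<mu>\<^sup>*\<^sup>n(0)\<close> is bounded by \<open>\<parallel>\<lambda>(\<mu>)\<parallel>\<^sub>p\<^sub>\<rightarrow>\<^sub>p\<^sup>n\<close>, since \<open>\<mu>\<^sup>*\<^sup>n = \<lambda>(\<mu>)\<^sup>n \<delta>\<^sub>0\<close>.\<close>
lemma return_le_op_norm_power:
  assumes p: "p > 0"
  shows "(avg_op S ^^ n) (indicator {0}) 0 \<le> op_norm p (normalized_indicator S) ^ n"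
proof -
  define \<theta> where "\<theta> = op_norm p (normalized_indicator S)"
  define U where "U k x = complex_of_real ((avg_op S ^^ k) (indicator {0}) x)" for k x
  have finsupp_U: "finsupp ((avg_op S ^^ k) (indicator {0}))" for k
    by (rule finsupp_avg_op_pow[OF fin finsupp_indicator_zero])
  have "lp_norm p (U k) \<le> \<theta> ^ k" for k
  proof (induction k)
    case 0
    have "lp_norm p (U 0) = (\<Sum>x\<in>{0}. norm (U 0 x) powr p) powr (1 / p)"
      by (rule lp_norm_eq_sum_if_zero_outside) (use p in \<open>auto simp: U_def\<close>)
    also have "\<dots> = 1" by (simp add: U_def)
    finally show ?case by simp
  next
    case (Suc k)
    have "U (Suc k) = conv (normalized_indicator S) (U k)"
      unfolding U_def by (simp add: conv_normalized_indicator_of_real)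
    then have "lp_norm p (U (Suc k)) \<le> \<theta> * lp_norm p (U k)"
      unfolding \<theta>_def using finsupp_U[of k]
      by (auto simp: finsupp_def U_def intro!: lp_norm_conv_normalized_indicator_le_op_norm_mult[OF p])
    also have "\<dots> \<le> \<theta> * \<theta> ^ k"
      using Suc op_norm_normalized_indicator_nonneg[OF p] by (intro mult_left_mono) (auto simp: \<theta>_def)
    finally show ?case by simp
  qed
  moreover have "(avg_op S ^^ n) (indicator {0}) 0 \<le> lp_norm p (U n)"
  proof -
    define W where "W = {x. (avg_op S ^^ n) (indicator {0}) x \<noteq> 0}"
    have W: "finite W" using finsupp_U[of n] by (simp add: W_def finsupp_def)
    have "norm (U n 0) powr p \<le> (\<Sum>x\<in>W. norm (U n x) powr p)"
    proof (cases "0 \<in> W")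
      case True then show ?thesis using W by (intro member_le_sum) auto
    next
      case False then show ?thesis by (auto simp: W_def U_def intro!: sum_nonneg)
    qed
    moreover have "lp_norm p (U n) = (\<Sum>x\<in>W. norm (U n x) powr p) powr (1 / p)"
      by (rule lp_norm_eq_sum_if_zero_outside[OF W]) (use p in \<open>simp_all add: W_def U_def\<close>)
    ultimately have "(norm (U n 0) powr p) powr (1 / p) \<le> lp_norm p (U n)"
      using p by (simp add: powr_mono2)
    moreover have "(avg_op S ^^ n) (indicator {0}) 0 \<ge> 0"
      by (rule avg_op_pow_nonneg) simp
    ultimately show ?thesis using p by (simp add: powr_powr U_def)
  qed
  ultimately show ?thesis unfolding \<theta>_def by (meson order_trans)
qed

lemma lp_norm_normalized_indicator:
  assumes p: "p > 0"
  shows "lp_norm p (normalized_indicator S) = real (card S) powr (1 / p - 1)"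
proof -
  have "(\<Sum>x\<in>S. norm (normalized_indicator S x) powr p) = real (card S) * (1 / real (card S)) powr p"
    by (simp add: normalized_indicator_def norm_divide)
  moreover have "lp_norm p (normalized_indicator S)
      = (\<Sum>x\<in>S. norm (normalized_indicator S x) powr p) powr (1 / p)"
    by (rule lp_norm_eq_sum_if_zero_outside[OF fin]) (use p in \<open>simp_all add: normalized_indicator_def\<close>)
  ultimately have "lp_norm p (normalized_indicator S)
      = (real (card S) * (1 / real (card S)) powr p) powr (1 / p)"
    by simp
  also have "\<dots> = real (card S) powr (1 / p) * (1 / real (card S))"
    using p real_card_pos by (simp add: powr_mult powr_powr)
  also have "\<dots> = real (card S) powr (1 / p - 1)"
    using real_card_pos by (simp add: powr_diff)
  finally show ?thesis .
qed

text \<open>Test the operator on the Dirac mass at \<open>0\<close>.\<close>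
lemma rho_ge_card_powr: "rho S \<ge> real (card S) powr (- 1 / 2)"
proof -
  define \<delta> :: "'a \<Rightarrow> complex" where "\<delta> = indicator {0}"
  have "in_lp 2 \<delta>" by (rule in_lp_if_zero_outside[of "{0}"]) (auto simp: \<delta>_def)
  moreover have "lp_norm 2 \<delta> = (\<Sum>x\<in>{0}. norm (\<delta> x) powr 2) powr (1 / 2)"
    by (rule lp_norm_eq_sum_if_zero_outside) (auto simp: \<delta>_def)
  then have "lp_norm 2 \<delta> = 1" by (simp add: \<delta>_def)
  moreover have "conv (normalized_indicator S) \<delta> = normalized_indicator S"
  proof
    fix x
    have "- g + x = 0 \<longleftrightarrow> g = x" for g :: 'a
      by (simp add: add_eq_0_iff2)
    then have "conv (normalized_indicator S) \<delta> x = (\<Sum>g\<in>S. if g = x then normalized_indicator S g else 0)"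
      unfolding conv_def supp_normalized_indicator by (intro sum.cong) (auto simp: \<delta>_def)
    then show "conv (normalized_indicator S) \<delta> x = normalized_indicator S x"
      using fin by (simp add: normalized_indicator_def)
  qed
  ultimately show ?thesis
    using lp_norm_conv_normalized_indicator_le_op_norm[of 2 \<delta>] lp_norm_normalized_indicator[of 2]
    by (simp add: rho_eq_op_norm)
qed

lemma rho_pos: "rho S > 0"
proof -
  have "real (card S) powr (- 1 / 2) > 0" using real_card_pos by simp
  then show ?thesis using rho_ge_card_powr by linarith
qed

end

lemma sum_norm_conv_normalized_indicator_sq_le:
  assumes S: "finite_symmetric S" "S \<noteq> {}" and \<theta>: "\<theta> \<ge> 0"
    and return: "\<And>n. (avg_op S ^^ n) (indicator {0}) 0 \<le> \<theta> ^ n"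
    and f: "in_lp 2 f" and X: "finite X"
  shows "(\<Sum>x\<in>X. norm (conv (normalized_indicator S) f x) powr 2)
           \<le> \<theta>\<^sup>2 * infsum (\<lambda>x. norm (f x) powr 2) UNIV"
proof -
  have fin: "finite S" using S by (simp add: finite_symmetric_def)
  define Y where "Y = (\<lambda>(s, x). - s + x) ` (S \<times> X)"
  have Y: "finite Y" using X fin by (simp add: Y_def)
  define h where "h y = (if y \<in> Y then norm (f y) else 0)" for y
  have h: "finsupp h" unfolding finsupp_def h_def by (rule finite_subset[OF _ Y]) auto
  have "(\<Sum>x\<in>X. norm (conv (normalized_indicator S) f x) powr 2) \<le> (\<Sum>x\<in>X. avg_op S h x * avg_op S h x)"
  proof (rule sum_mono)
    fix x assume "x \<in> X"
    then have "conv (normalized_indicator S) f x = conv (normalized_indicator S) (\<lambda>y. if y \<in> Y then f y else 0) x"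
      unfolding conv_normalized_indicator[OF fin S(2)] by (auto simp: Y_def intro!: sum.cong)
    then have "norm (conv (normalized_indicator S) f x)
                 \<le> avg_op S (\<lambda>y. norm (if y \<in> Y then f y else 0)) x"
      using norm_conv_normalized_indicator_le[OF fin S(2)] by simp
    also have "(\<lambda>y. norm (if y \<in> Y then f y else 0)) = h" by (auto simp: h_def)
    finally have "norm (conv (normalized_indicator S) f x) \<le> avg_op S h x" .
    then show "norm (conv (normalized_indicator S) f x) powr 2 \<le> avg_op S h x * avg_op S h x"
      by (simp add: power2_eq_square mult_mono')
  qed
  also have "\<dots> \<le> l2_inner (avg_op S h) (avg_op S h)"
    unfolding l2_inner_def
    by (rule finite_sum_le_infsum[OF finsupp_summable[OF finsupp_mult_left[OF finsupp_avg_op[OF fin h]]] X])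
      auto
  also have "\<dots> \<le> \<theta>\<^sup>2 * l2_inner h h"
    by (rule avg_op_l2_le_return_rate[OF S \<theta> return h]) (simp add: h_def)
  also have "l2_inner h h \<le> infsum (\<lambda>x. norm (f x) powr 2) UNIV"
  proof -
    have "l2_inner h h = (\<Sum>y\<in>Y. norm (f y) powr 2)"
      unfolding l2_inner_def by (subst infsum_eq_sum_if_zero_outside[OF Y]) (auto simp: h_def power2_eq_square)
    also have "\<dots> \<le> infsum (\<lambda>x. norm (f x) powr 2) UNIV"
      using f unfolding in_lp_def by (intro finite_sum_le_infsum Y) auto
    finally show ?thesis .
  qed
  then have "\<theta>\<^sup>2 * l2_inner h h \<le> \<theta>\<^sup>2 * infsum (\<lambda>x. norm (f x) powr 2) UNIV"
    by (intro mult_left_mono) auto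
  finally show ?thesis .
qed

text \<open>The \<open>\<ell>\<^sup>2\<close> norm of convolution by a symmetric probability measure is its spectral radius,
  which is bounded by the decay rate of return probabilities, and these decay at least like
  the \<open>\<ell>\<^sup>p\<close> operator norm.\<close>
lemma rho_le_op_norm:
  assumes S: "finite_symmetric S" "S \<noteq> {}" and p: "p > 0"
  shows "rho S \<le> op_norm p (normalized_indicator S)"
proof -
  have fin: "finite S" using S by (simp add: finite_symmetric_def)
  define \<theta> where "\<theta> = op_norm p (normalized_indicator S)"
  have \<theta>: "\<theta> \<ge> 0" unfolding \<theta>_def by (rule op_norm_normalized_indicator_nonneg[OF fin S(2) p])
  have return: "(avg_op S ^^ n) (indicator {0}) 0 \<le> \<theta> ^ n" for n
    unfolding \<theta>_def by (rule return_le_op_norm_power[OF fin S(2) p])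
  show ?thesis unfolding rho_eq_op_norm \<theta>_def[symmetric]
  proof (rule op_norm_le)
    fix f :: "'a \<Rightarrow> complex" assume f: "in_lp 2 f" "lp_norm 2 f \<le> 1"
    have "lp_norm 2 (conv (normalized_indicator S) f) \<le> (\<theta>\<^sup>2) powr (1 / 2)"
    proof (rule lp_norm_le_if_finite_sums_le)
      fix X :: "'a set" assume "finite X"
      then have "(\<Sum>x\<in>X. norm (conv (normalized_indicator S) f x) powr 2)
                   \<le> \<theta>\<^sup>2 * infsum (\<lambda>x. norm (f x) powr 2) UNIV"
        by (rule sum_norm_conv_normalized_indicator_sq_le[OF S \<theta> return f(1)])
      also have "\<dots> \<le> \<theta>\<^sup>2"
        using lp_norm_le_one_imp_infsum_le_one[OF f(2)] by (simp add: mult_left_le)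
      finally show "(\<Sum>x\<in>X. norm (conv (normalized_indicator S) f x) powr 2) \<le> \<theta>\<^sup>2" .
    qed auto
    then show "lp_norm 2 (conv (normalized_indicator S) f) \<le> \<theta>"
      using \<theta> by (simp add: powr_half_sqrt)
  qed
qed

section \<open>Property RD and the exponent \<open>r\<close>\<close>

lemma rho_le_of_RD:
  fixes L :: "'a::group_add \<Rightarrow> real"
  assumes p: "p > 0"
    and RD: "\<forall>(a::'a \<Rightarrow> complex) d. finite (supp a) \<and> d \<ge> 0 \<and> supp a \<subseteq> {g. L g \<le> d} \<longrightarrow>
        op_norm p a \<le> poly P d * lp_norm p a"
    and S: "finite_symmetric S" "S \<noteq> {}" and d: "d \<ge> 0" and ball: "S \<subseteq> {g. L g \<le> d}"
  shows "rho S \<le> poly P d * real (card S) powr (1 / p - 1)"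
proof -
  have fin: "finite S" using S by (simp add: finite_symmetric_def)
  have "rho S \<le> op_norm p (normalized_indicator S)"
    by (rule rho_le_op_norm[OF S p])
  also have "\<dots> \<le> poly P d * lp_norm p (normalized_indicator S)"
    using RD d ball fin by (simp add: supp_normalized_indicator[OF fin S(2)])
  also have "lp_norm p (normalized_indicator S) = real (card S) powr (1 / p - 1)"
    by (rule lp_norm_normalized_indicator[OF fin S(2) p])
  finally show ?thesis .
qed

lemma abs_poly_le:
  fixes P :: "real poly" and x :: real
  assumes x: "x \<ge> 0"
  shows "\<bar>poly P x\<bar> \<le> (\<Sum>i\<le>degree P. \<bar>coeff P i\<bar>) * (1 + x) ^ degree P"
proof -
  have "\<bar>poly P x\<bar> \<le> (\<Sum>i\<le>degree P. \<bar>coeff P i * x ^ i\<bar>)"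
    unfolding poly_altdef by (rule sum_abs)
  also have "\<dots> \<le> (\<Sum>i\<le>degree P. \<bar>coeff P i\<bar> * (1 + x) ^ degree P)"
  proof (rule sum_mono)
    fix i assume "i \<in> {..degree P}"
    then have "x ^ i \<le> (1 + x) ^ degree P"
      using x by (meson atMost_iff le_add_same_cancel2 order_trans power_increasing power_mono zero_le_one
          le_add_same_cancel1 add_increasing)
    then show "\<bar>coeff P i * x ^ i\<bar> \<le> \<bar>coeff P i\<bar> * (1 + x) ^ degree P"
      using x by (simp add: abs_mult mult_left_mono)
  qed
  finally show ?thesis by (simp add: sum_distrib_right)
qed

lemma card_le_of_RD_rho_gt:
  fixes L :: "'a::group_add \<Rightarrow> real"
  assumes p: "p > 0"
    and RD: "\<forall>(a::'a \<Rightarrow> complex) d. finite (supp a) \<and> d \<ge> 0 \<and> supp a \<subseteq> {g. L g \<le> d} \<longrightarrow>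
        op_norm p a \<le> poly P d * lp_norm p a"
    and S: "finite_symmetric S" "S \<noteq> {}" and d: "d \<ge> 0" and ball: "S \<subseteq> {g. L g \<le> d}"
    and \<eta>: "\<eta> > 0" and rho_gt: "card S \<ge> 2 \<Longrightarrow> rho S > real (card S) powr (1 / p - 1 + \<eta>)"
  shows "real (card S) \<le> max 2 (\<bar>poly P d\<bar> powr (1 / \<eta>))"
proof (cases "card S \<ge> 2")
  case True
  define M where "M = real (card S)"
  have M: "M > 1" using True by (simp add: M_def)
  have "M powr (1 / p - 1) * M powr \<eta> < poly P d * M powr (1 / p - 1)"
    using rho_gt[OF True] rho_le_of_RD[OF p RD S d ball]
    by (simp add: M_def powr_add mult.commute)
  then have "M powr \<eta> < \<bar>poly P d\<bar>"
    using M by (simp add: mult.commute)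
  then have "(M powr \<eta>) powr (1 / \<eta>) < \<bar>poly P d\<bar> powr (1 / \<eta>)"
    using \<eta> by (intro powr_less_mono2) auto
  then show ?thesis using \<eta> M by (simp add: M_def powr_powr)
qed simp

lemma finite_if_card_subsets_le:
  assumes "\<And>F. finite F \<Longrightarrow> F \<subseteq> B \<Longrightarrow> real (card F) \<le> c"
  shows "finite B"
proof (rule ccontr)
  assume "infinite B"
  obtain n :: nat where n: "real n > c" using reals_Archimedean2 by blast
  obtain F where "finite F" "card F = n" "F \<subseteq> B"
    using infinite_arbitrarily_large[OF \<open>infinite B\<close>] by blast
  then show False using assms n by fastforce
qed

lemma max_abs_poly_powr_le:
  fixes P :: "real poly"
  assumes d: "d \<ge> 0" and \<eta>: "\<eta> > 0"
  shows "max 2 (\<bar>poly P d\<bar> powr (1 / \<eta>))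
           \<le> (2 + (\<Sum>i\<le>degree P. \<bar>coeff P i\<bar>) powr (1 / \<eta>)) * (1 + d) powr (degree P / \<eta>)"
proof -
  define A where "A = (\<Sum>i\<le>degree P. \<bar>coeff P i\<bar>)"
  have A: "A \<ge> 0" unfolding A_def by (simp add: sum_nonneg)
  have one: "(1 + d) powr (degree P / \<eta>) \<ge> 1"
    using d \<eta> by (intro ge_one_powr_ge_zero) auto
  have "\<bar>poly P d\<bar> powr (1 / \<eta>) \<le> (A * (1 + d) ^ degree P) powr (1 / \<eta>)"
    using abs_poly_le[OF d, of P] \<eta> by (intro powr_mono2) (auto simp: A_def)
  also have "\<dots> = A powr (1 / \<eta>) * (1 + d) powr (degree P / \<eta>)"
    using d A by (simp add: powr_mult powr_realpow[symmetric] powr_powr)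
  finally have "\<bar>poly P d\<bar> powr (1 / \<eta>) \<le> A powr (1 / \<eta>) * (1 + d) powr (degree P / \<eta>)" .
  moreover have "A powr (1 / \<eta>) * (1 + d) powr (degree P / \<eta>) \<ge> 0" by simp
  ultimately show ?thesis
    unfolding A_def[symmetric] distrib_right using one by (intro max.boundedI) linarith+
qed

text \<open>Combined with RD\<open>\<^sub>p\<close>, the lower bound on \<open>\<rho>\<close> bounds the size of every ball by a polynomial
  in its radius.\<close>
lemma amenable_if_rho_gt_of_RD:
  fixes L :: "'a::group_add \<Rightarrow> real" and S0 :: "'a set"
  assumes p: "p > 0" and L: "length_function L"
    and RD: "\<forall>(a::'a \<Rightarrow> complex) d. finite (supp a) \<and> d \<ge> 0 \<and> supp a \<subseteq> {g. L g \<le> d} \<longrightarrow>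
        op_norm p a \<le> poly P d * lp_norm p a"
    and S0: "finite_symmetric S0" and \<eta>: "\<eta> > 0"
    and rho_gt: "\<And>S. finite_symmetric S \<Longrightarrow> S0 \<subseteq> S \<Longrightarrow> card S \<ge> 2 \<Longrightarrow>
        rho S > real (card S) powr (1 / p - 1 + \<eta>)"
  shows "amenable TYPE('a)"
proof -
  have L0: "L 0 = 0" and L_minus: "\<And>g. L (- g) = L g"
    and L_add: "\<And>g h. L (g + h) \<le> L g + L h"
    using L unfolding length_function_def by auto
  define T0 where "T0 = insert 0 S0"
  have T0: "finite T0" using S0 by (simp add: T0_def finite_symmetric_def)
  define d0 where "d0 = Max (L ` T0)"
  have d0: "d0 \<ge> 0" unfolding d0_def using T0 L0 by (intro Max_ge_iff[THEN iffD2]) (auto simp: T0_def)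
  have T0_ball: "T0 \<subseteq> {g. L g \<le> d0}" unfolding d0_def using T0 by auto
  have card_le: "real (card F) \<le> max 2 (\<bar>poly P d\<bar> powr (1 / \<eta>))"
    if d: "d \<ge> d0" and F: "finite F" "F \<subseteq> {g. L g \<le> d}" for d F
  proof -
    define S where "S = F \<union> uminus ` F \<union> T0"
    have S: "finite_symmetric S"
      using F T0 S0 by (auto simp: S_def T0_def finite_symmetric_def)
    have ball: "S \<subseteq> {g. L g \<le> d}" using F T0_ball d by (auto simp: S_def L_minus)
    have "S0 \<subseteq> S" "S \<noteq> {}" "d \<ge> 0" using d d0 by (auto simp: S_def T0_def)
    then have "real (card S) \<le> max 2 (\<bar>poly P d\<bar> powr (1 / \<eta>))"
      using card_le_of_RD_rho_gt[OF p RD S _ _ ball \<eta>] rho_gt[OF S] by blast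
    moreover have "card F \<le> card S" using S by (intro card_mono) (auto simp: S_def finite_symmetric_def)
    ultimately show ?thesis by linarith
  qed
  have finite_ball: "finite {g. L g \<le> d}" for d
  proof -
    have "finite {g. L g \<le> max d d0}"
      using card_le[of "max d d0"] by (intro finite_if_card_subsets_le) auto
    then show ?thesis by (rule finite_subset[rotated]) auto
  qed
  show ?thesis
  proof (rule amenable_if_polynomial_growth[OF L_add L0 finite_ball _ d0])
    fix d assume d: "d \<ge> d0"
    have "real (card {g. L g \<le> d}) \<le> max 2 (\<bar>poly P d\<bar> powr (1 / \<eta>))"
      by (rule card_le[OF d finite_ball order_refl])
    also have "\<dots> \<le> (2 + (\<Sum>i\<le>degree P. \<bar>coeff P i\<bar>) powr (1 / \<eta>)) * (1 + d) powr (degree P / \<eta>)"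
      using d d0 \<eta> by (intro max_abs_poly_powr_le) auto
    finally show "real (card {g. L g \<le> d})
      \<le> (2 + (\<Sum>i\<le>degree P. \<bar>coeff P i\<bar>) powr (1 / \<eta>)) * (1 + d) powr (degree P / \<eta>)" .
  qed (use \<eta> in \<open>auto intro: add_pos_nonneg\<close>)
qed

lemma powr_less_if_less_ln_ratio:
  fixes x y r :: real
  assumes x: "x > 1" and y: "y > 0" and r: "r < ln y / ln x"
  shows "x powr r < y"
proof -
  have "ln (x powr r) < ln y" using x r by (simp add: ln_powr less_divide_eq)
  moreover have "x powr r > 0" using x by simp
  ultimately show ?thesis using y ln_less_cancel_iff by blast
qed

lemma INF_ln_rho_ratio_le_of_RD:
  fixes L :: "'a::group_add \<Rightarrow> real" and S0 :: "'a set"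
  assumes non_amenable: "\<not> amenable TYPE('a)" and p: "p > 0" and L: "length_function L"
    and RD: "\<forall>(a::'a \<Rightarrow> complex) d. finite (supp a) \<and> d \<ge> 0 \<and> supp a \<subseteq> {g. L g \<le> d} \<longrightarrow>
        op_norm p a \<le> poly P d * lp_norm p a"
    and S0: "finite_symmetric S0"
  shows "(INF S\<in>{S. finite_symmetric S \<and> S0 \<subseteq> S}. ereal (ln (rho S) / ln (real (card S))))
           \<le> ereal (1 / p - 1)"
proof (rule ccontr)
  assume "\<not> ?thesis"
  then obtain r where "ereal (1 / p - 1) < ereal r"
    and r: "ereal r < (INF S\<in>{S. finite_symmetric S \<and> S0 \<subseteq> S}. ereal (ln (rho S) / ln (real (card S))))"
    by (meson ereal_dense2 not_le)
  then have r_gt: "1 / p - 1 < r" by simp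
  have rho_gt: "rho S > real (card S) powr (1 / p - 1 + (r - (1 / p - 1)))"
    if S: "finite_symmetric S" "S0 \<subseteq> S" "card S \<ge> 2" for S
  proof -
    have "S \<noteq> {}" using S(3) by auto
    then have "rho S > 0"
      using rho_pos[of S] S(1) by (simp add: finite_symmetric_def)
    moreover have "r < ln (rho S) / ln (real (card S))"
      using less_INF_D[OF r, of S] S by simp
    ultimately show ?thesis
      using powr_less_if_less_ln_ratio[of "real (card S)" "rho S" r] S(3) by simp
  qed
  have "amenable TYPE('a)"
    by (rule amenable_if_rho_gt_of_RD[OF p L RD S0 _ rho_gt]) (use r_gt in simp)
  then show False using non_amenable by simp
qed

lemma r_exponent_ge_of_RD:
  assumes non_amenable: "\<not> amenable TYPE('a::group_add)" and p: "p > 0" and RD: "has_RD p TYPE('a)"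
  shows "r_exponent TYPE('a) \<ge> ereal (1 - 1 / p)"
proof -
  obtain L :: "'a \<Rightarrow> real" and P :: "real poly" where L: "length_function L" and
    RD: "\<forall>(a::'a \<Rightarrow> complex) d. finite (supp a) \<and> d \<ge> 0 \<and> supp a \<subseteq> {g. L g \<le> d} \<longrightarrow>
        op_norm p a \<le> poly P d * lp_norm p a"
    using RD unfolding has_RD_def by blast
  define f where "f S = ereal (ln (rho S) / ln (real (card S)))" for S :: "'a set"
  have SUP_le: "(SUP S0\<in>{S. finite_symmetric S}. INF S\<in>{S. finite_symmetric S \<and> S0 \<subseteq> S}. f S)
               \<le> ereal (1 / p - 1)"
    unfolding f_def by (intro SUP_least INF_ln_rho_ratio_le_of_RD[OF non_amenable p L RD]) simp
  have "ereal (1 - 1 / p) = - ereal (1 / p - 1)" by simp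
  also have "\<dots> \<le> - (SUP S0\<in>{S. finite_symmetric S}. INF S\<in>{S. finite_symmetric S \<and> S0 \<subseteq> S}. f S)"
    using SUP_le by (simp only: ereal_minus_le_minus)
  also have "\<dots> = r_exponent TYPE('a)" unfolding r_exponent_def f_def ..
  finally show ?thesis .
qed

lemma r_exponent_le_half: "r_exponent TYPE('a::group_add) \<le> ereal (1 / 2)"
proof -
  define f where "f S = ereal (ln (rho S) / ln (real (card S)))" for S :: "'a set"
  have "ereal (- 1 / 2) \<le> f S" if S: "finite_symmetric S" "{0} \<subseteq> S" for S
  proof (cases "card S \<ge> 2")
    case True
    have fin: "finite S" and ne: "S \<noteq> {}" using S by (auto simp: finite_symmetric_def)
    have "ln (real (card S) powr (- 1 / 2)) \<le> ln (rho S)"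
      using rho_ge_card_powr[OF fin ne] rho_pos[OF fin ne] real_card_pos[OF fin ne] by (subst ln_le_cancel_iff) auto
    then show ?thesis using True by (simp add: f_def ln_powr le_divide_eq)
  next
    case False
    then have "ln (real (card S)) = 0"
      by (cases "card S") (auto simp: less_Suc_eq)
    then show ?thesis by (simp add: f_def)
  qed
  then have "ereal (- 1 / 2) \<le> (INF S\<in>{S. finite_symmetric S \<and> {0} \<subseteq> S}. f S)"
    by (auto intro: INF_greatest)
  also have "\<dots> \<le> (SUP S0\<in>{S. finite_symmetric S}. INF S\<in>{S. finite_symmetric S \<and> S0 \<subseteq> S}. f S)"
    by (rule SUP_upper2[of "{0}"]) (auto simp: finite_symmetric_def)
  finally have le_SUP: "ereal (- 1 / 2)
      \<le> (SUP S0\<in>{S. finite_symmetric S}. INF S\<in>{S. finite_symmetric S \<and> S0 \<subseteq> S}. f S)" .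
  have "r_exponent TYPE('a)
      = - (SUP S0\<in>{S. finite_symmetric S}. INF S\<in>{S. finite_symmetric S \<and> S0 \<subseteq> S}. f S)"
    unfolding r_exponent_def f_def ..
  also have "\<dots> \<le> - ereal (- 1 / 2)"
    using le_SUP by (simp only: ereal_minus_le_minus)
  also have "\<dots> = ereal (1 / 2)" by simp
  finally show ?thesis .
qed

theorem proposition8p1:
  assumes "\<not> amenable TYPE('a::group_add)"
  shows "(\<forall>p::real. 1 \<le> p \<and> p \<le> 2 \<and> has_RD p TYPE('a) \<longrightarrow>
            r_exponent TYPE('a) \<ge> ereal (1 - 1 / p))
       \<and> (has_RD 2 TYPE('a) \<longrightarrow> r_exponent TYPE('a) = ereal (1 / 2))"
proof (intro conjI allI impI)
  fix p :: real assume "1 \<le> p \<and> p \<le> 2 \<and> has_RD p TYPE('a)"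
  then show "r_exponent TYPE('a) \<ge> ereal (1 - 1 / p)"
    using r_exponent_ge_of_RD[OF assms] by simp
next
  assume "has_RD 2 TYPE('a)"
  then have "r_exponent TYPE('a) \<ge> ereal (1 / 2)"
    using r_exponent_ge_of_RD[OF assms, of 2] by simp
  then show "r_exponent TYPE('a) = ereal (1 / 2)"
    using r_exponent_le_half by (rule antisym[rotated])
qed

end
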